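(* Under the hypotheses of the following statement, the vectors $u_1$ and $u_2$ can be chosen nonnegative. Statement: Let $\mathcal{A}\in\mathbb{R}^{m\times m\times n}$ be $(1,2)$-symmetric and nonnegative with $\mathcal{A}=\begin{pmatrix}\mathcal{A}_1&0\\0&\mathcal{A}_2\end{pmatrix}$, $\mathcal{A}_i\in\mathbb{R}^{m_i\times m_i\times n}$, $m_1+m_2=m$, $\mathcal{A}_1,\mathcal{A}_2$ irreducible; with $\varphi$ as defined in the context, assume $\varphi(\mathcal{A})<\varphi(\mathcal{A}_1)+\|\mathcal{A}_2\|^2$, $\varphi(\mathcal{A})<\varphi(\mathcal{A}_2)+\|\mathcal{A}_1\|^2$, and that the solution $(U,U,W)$ of the $(1,2)$-symmetric best rank-$(2,2,2)$ approximation problem for $\mathcal{A}$ is unique; then a representative has $U=\begin{pmatrix}u_1&0\\0&u_2\end{pmatrix}$ with $u_1\in\mathbb{R}^{m_1}$, $u_2\in\mathbb{R}^{m_2}$.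
   Context: A tensor is $(1,2)$-symmetric if $\mathcal{A}(i,j,k)=\mathcal{A}(j,i,k)$. It is (1,2)-reducible if there exist nonempty proper $I\subset\{1,\dots,m\}$ and nonempty $K\subseteq\{1,\dots,n\}$ with $a_{ijk}=a_{jik}=0$ for $i\in I,j\notin I,k\in K$; 3-reducible if $a_{ijk}=0$ for $i,j\in I,k\in K$; irreducible if neither holds for any $I,K$. $(X,Y,Z)\cdot\mathcal{H}$ has entries $\sum x_{i\alpha}y_{j\beta}z_{k\gamma}h_{\alpha\beta\gamma}$; $\mathcal{A}\cdot(X,Y,Z):=(X^T,Y^T,Z^T)\cdot\mathcal{A}$; Frobenius norm. For $(1,2)$-symmetric $\mathcal{B}\in\mathbb{R}^{k\times k\times n}$, $\varphi(\mathcal{B})=\min\|\mathcal{B}-(X,X,Z)\cdot\mathcal{H}\|^2$ over $X\in\mathbb{R}^{k\times2}$, $Z\in\mathbb{R}^{n\times2}$ with orthonormal columns and $\mathcal{H}\in\mathbb{R}^{2\times2\times2}$. The $(1,2)$-symmetric best rank-$(2,2,2)$ approximation problem is $\max\|\mathcal{A}\cdot(X,X,Z)\|$ over $X^TX=I_2,Z^TZ=I_2$; solutions are equivalence classes under $(U,U,W)\mapsto(UQ_1,UQ_1,WQ_3)$ with $Q_1,Q_3$ orthogonal. *)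

theory Defs
  imports Main "HOL-Analysis.Analysis"
begin

text \<open>Third-order real tensors of size p x q x r are represented as functions
  nat => nat => nat => real, with indices starting at 0; only entries with
  i < p, j < q, k < r are meaningful.  Matrices of size p x 2 are
  functions nat => nat => real (row index, column index).\<close>

type_synonym tensor3 = "nat \<Rightarrow> nat \<Rightarrow> nat \<Rightarrow> real"
type_synonym matrix = "nat \<Rightarrow> nat \<Rightarrow> real"

definition sym12 :: "tensor3 \<Rightarrow> nat \<Rightarrow> nat \<Rightarrow> bool" where
  "sym12 A m n \<longleftrightarrow> (\<forall>i<m. \<forall>j<m. \<forall>k<n. A i j k = A j i k)"

definition nonneg3 :: "tensor3 \<Rightarrow> nat \<Rightarrow> nat \<Rightarrow> bool" where
  "nonneg3 A m n \<longleftrightarrow> (\<forall>i<m. \<forall>j<m. \<forall>k<n. A i j k \<ge> 0)"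

definition reducible12 :: "tensor3 \<Rightarrow> nat \<Rightarrow> nat \<Rightarrow> bool" where
  "reducible12 A m n \<longleftrightarrow> (\<exists>I K. I \<noteq> {} \<and> I \<subset> {..<m} \<and> K \<noteq> {} \<and> K \<subseteq> {..<n} \<and>
     (\<forall>i\<in>I. \<forall>j\<in>{..<m} - I. \<forall>k\<in>K. A i j k = 0 \<and> A j i k = 0))"

definition reducible3 :: "tensor3 \<Rightarrow> nat \<Rightarrow> nat \<Rightarrow> bool" where
  "reducible3 A m n \<longleftrightarrow> (\<exists>I K. I \<noteq> {} \<and> I \<subset> {..<m} \<and> K \<noteq> {} \<and> K \<subseteq> {..<n} \<and>
     (\<forall>i\<in>I. \<forall>j\<in>I. \<forall>k\<in>K. A i j k = 0))"

definition irreducible3 :: "tensor3 \<Rightarrow> nat \<Rightarrow> nat \<Rightarrow> bool" where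
  "irreducible3 A m n \<longleftrightarrow> \<not> reducible12 A m n \<and> \<not> reducible3 A m n"

definition frob2 :: "tensor3 \<Rightarrow> nat \<Rightarrow> nat \<Rightarrow> nat \<Rightarrow> real" where
  "frob2 T p q r = (\<Sum>i<p. \<Sum>j<q. \<Sum>k<r. (T i j k)\<^sup>2)"

definition orth2 :: "nat \<Rightarrow> matrix \<Rightarrow> bool" where
  "orth2 p X \<longleftrightarrow> (\<forall>a<2. \<forall>b<2. (\<Sum>i<p. X i a * X i b) = (if a = b then 1 else 0))"

definition tucker :: "matrix \<Rightarrow> matrix \<Rightarrow> matrix \<Rightarrow> tensor3 \<Rightarrow> tensor3" where
  "tucker X Y Z H = (\<lambda>i j k. \<Sum>\<alpha><2. \<Sum>\<beta><2. \<Sum>\<gamma><2. X i \<alpha> * Y j \<beta> * Z k \<gamma> * H \<alpha> \<beta> \<gamma>)"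

definition proj :: "tensor3 \<Rightarrow> nat \<Rightarrow> nat \<Rightarrow> matrix \<Rightarrow> matrix \<Rightarrow> matrix \<Rightarrow> tensor3" where
  "proj A m n X Y Z = (\<lambda>a b c. \<Sum>i<m. \<Sum>j<m. \<Sum>k<n. X i a * Y j b * Z k c * A i j k)"

text \<open>phi(B) for a (1,2)-symmetric k x k x n tensor B (the minimum is attained,
  so it equals the infimum).\<close>
definition phi :: "tensor3 \<Rightarrow> nat \<Rightarrow> nat \<Rightarrow> real" where
  "phi B k n = Inf {frob2 (\<lambda>i j l. B i j l - tucker X X Z H i j l) k k n
                     | X Z H. orth2 k X \<and> orth2 n Z}"

definition best222 :: "tensor3 \<Rightarrow> nat \<Rightarrow> nat \<Rightarrow> matrix \<Rightarrow> matrix \<Rightarrow> bool" where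
  "best222 A m n U W \<longleftrightarrow> orth2 m U \<and> orth2 n W \<and>
     (\<forall>X Z. orth2 m X \<and> orth2 n Z \<longrightarrow>
        sqrt (frob2 (proj A m n X X Z) 2 2 2) \<le> sqrt (frob2 (proj A m n U U W) 2 2 2))"

definition orthogonal2 :: "matrix \<Rightarrow> bool" where
  "orthogonal2 Q \<longleftrightarrow> orth2 2 Q"

definition equiv222 :: "nat \<Rightarrow> nat \<Rightarrow> matrix \<Rightarrow> matrix \<Rightarrow> matrix \<Rightarrow> matrix \<Rightarrow> bool" where
  "equiv222 m n U W U' W' \<longleftrightarrow> (\<exists>Q1 Q3. orthogonal2 Q1 \<and> orthogonal2 Q3 \<and>
     (\<forall>i<m. \<forall>a<2. U' i a = (\<Sum>b<2. U i b * Q1 b a)) \<and>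
     (\<forall>k<n. \<forall>c<2. W' k c = (\<Sum>d<2. W k d * Q3 d c)))"

definition unique_best222 :: "tensor3 \<Rightarrow> nat \<Rightarrow> nat \<Rightarrow> bool" where
  "unique_best222 A m n \<longleftrightarrow> (\<forall>U W U' W'. best222 A m n U W \<and> best222 A m n U' W' \<longrightarrow>
      equiv222 m n U W U' W')"

end

theory Submission
  imports Defs
begin

text \<open>A maximiser U of the projected norm exists by compactness, and phi A equals the squared
  norm of A minus the maximum.  The block sign flip D = diag(I, -I) leaves the objective
  invariant, so by uniqueness D U = U Q for an orthogonal Q; then Q = 2 P - I with P the Gram
  matrix of the first row block of U, and P is an orthogonal projection of the plane.  If P = 0
  or P = I, the whole of U lives in one block and phi A is at least phi of that block plus the
  norm of the other block, contradicting the hypotheses.  Hence P has rank one, and rotating the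
  columns of U along its range makes U block diagonal.  For a block diagonal U only the diagonal
  slices u_a' A_k u_a enter the objective; for nonnegative A taking absolute values of U can only
  increase them, and a suitable Z recovers their full norm, so the entrywise absolute value of U
  is again a maximiser.\<close>

lemma sum_lessThan_2: "(\<Sum>a<(2::nat). f a) = f 0 + f 1"
  by (simp add: numeral_2_eq_2)

lemma all_lessThan_2: "(\<forall>a<(2::nat). P a) \<longleftrightarrow> P 0 \<and> P 1"
  by (auto simp: less_2_cases_iff)

lemma sum_lessThan_add: "(\<Sum>i<p + (q::nat). f i) = (\<Sum>i<p. f i) + (\<Sum>i<q. f (i + p))"
  by (induction q) (auto simp: add.commute add.left_commute)

lemma sum_lessThan_eq_first_two:
  fixes f :: "nat \<Rightarrow> 'a::comm_monoid_add"
  assumes "n \<ge> 2" "\<forall>k\<ge>2. f k = 0"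
  shows "(\<Sum>k<n. f k) = f 0 + f 1"
proof -
  have "(\<Sum>k<n. f k) = (\<Sum>k<2. f k)"
    by (rule sum.mono_neutral_right) (use assms in auto)
  then show ?thesis by (simp add: sum_lessThan_2)
qed

lemma orth2_iff: "orth2 p X \<longleftrightarrow> (\<Sum>i<p. X i 0 * X i 0) = 1 \<and> (\<Sum>i<p. X i 1 * X i 1) = 1
   \<and> (\<Sum>i<p. X i 0 * X i 1) = 0 \<and> (\<Sum>i<p. X i 1 * X i 0) = 0"
  unfolding orth2_def all_lessThan_2 by auto

lemma sum_linear_comb:
  fixes f g h k :: "nat \<Rightarrow> real"
  assumes "\<And>i. i < p \<Longrightarrow> f i = g i * \<alpha> + h i * \<beta>"
  shows "(\<Sum>i<p. k i * f i) = \<alpha> * (\<Sum>i<p. k i * g i) + \<beta> * (\<Sum>i<p. k i * h i)"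
proof -
  have "(\<Sum>i<p. k i * f i) = (\<Sum>i<p. \<alpha> * (k i * g i) + \<beta> * (k i * h i))"
    using assms by (intro sum.cong) (simp_all add: ring_distribs mult_ac)
  then show ?thesis by (simp add: sum.distrib sum_distrib_left)
qed

definition proj_norm2 :: "tensor3 \<Rightarrow> nat \<Rightarrow> nat \<Rightarrow> matrix \<Rightarrow> matrix \<Rightarrow> real" where
  "proj_norm2 A m n X Z = frob2 (proj A m n X X Z) 2 2 2"

lemma best222_iff: "best222 A m n U W \<longleftrightarrow> orth2 m U \<and> orth2 n W \<and>
   (\<forall>X Z. orth2 m X \<and> orth2 n Z \<longrightarrow> proj_norm2 A m n X Z \<le> proj_norm2 A m n U W)"
  unfolding best222_def proj_norm2_def by simp

lemma best222_of_le:
  assumes "best222 A m n U W" "orth2 m V" "orth2 n Z"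
    and "proj_norm2 A m n U W \<le> proj_norm2 A m n V Z"
  shows "best222 A m n V Z"
  using assms unfolding best222_iff by (meson order_trans)

definition std2 :: matrix where "std2 = (\<lambda>i a. if i = a then 1 else 0)"

lemma orth2_std2: assumes "p \<ge> 2" shows "orth2 p std2"
proof -
  have "(\<Sum>i<p. std2 i a * std2 i b) = (if a = b then 1 else 0)" if "a < 2" "b < 2" for a b
  proof -
    have "(\<Sum>i<p. std2 i a * std2 i b) = (\<Sum>i\<in>{a}. (if a = b then 1 else 0))"
      by (rule sum.mono_neutral_cong_right) (use that assms in \<open>auto simp: std2_def\<close>)
    then show ?thesis by simp
  qed
  then show ?thesis unfolding orth2_def by auto
qed

subsection \<open>Existence of a best approximation\<close>

text \<open>Only the entries with row index below p and column index below 2 matter, so we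
  maximise over the compact set of truncated matrices.\<close>
definition trunc :: "nat \<Rightarrow> matrix \<Rightarrow> matrix" where
  "trunc p X = (\<lambda>i a. if i < p \<and> a < 2 then X i a else 0)"

lemma orth2_trunc_iff: "orth2 p (trunc p X) \<longleftrightarrow> orth2 p X"
  unfolding orth2_def trunc_def by simp

lemma proj_norm2_trunc: "proj_norm2 A m n (trunc m X) (trunc n Z) = proj_norm2 A m n X Z"
  unfolding proj_norm2_def frob2_def proj_def trunc_def by (simp add: sum_lessThan_2)

lemma orth2_entry_bound: assumes "orth2 p X" "i < p" "a < 2" shows "\<bar>X i a\<bar> \<le> 1"
proof -
  have "(X i a)\<^sup>2 \<le> (\<Sum>j<p. X j a * X j a)"
    using member_le_sum[of i "{..<p}" "\<lambda>j. X j a * X j a"] assms(2) by (simp add: power2_eq_square)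
  also have "\<dots> = 1" using assms(1,3) unfolding orth2_def by auto
  finally show ?thesis using abs_square_le_1 by blast
qed

lemma compact_PiE_UNIV:
  fixes S :: "nat \<Rightarrow> 'b::topological_space set"
  assumes "\<And>i. compact (S i)"
  shows "compact (Pi\<^sub>E UNIV S)"
proof -
  have "compactin (product_topology (\<lambda>i. euclidean) UNIV) (Pi\<^sub>E UNIV S)"
    using assms by (simp add: compactin_PiE)
  then show ?thesis by (simp add: euclidean_product_topology)
qed

definition entry_box :: "nat \<Rightarrow> matrix set" where
  "entry_box p = Pi\<^sub>E UNIV (\<lambda>i. Pi\<^sub>E UNIV (\<lambda>a. if i < p \<and> a < 2 then {-1..1::real} else {0}))"

lemma compact_entry_box: "compact (entry_box p)"
  unfolding entry_box_def by (intro compact_PiE_UNIV) auto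

lemma trunc_in_entry_box: assumes "orth2 p X" shows "trunc p X \<in> entry_box p"
  using orth2_entry_bound[OF assms] unfolding entry_box_def trunc_def
  by (auto simp: PiE_iff abs_le_iff)

lemma continuous_on_fst_entry [continuous_intros]:
  "continuous_on S (\<lambda>p::matrix \<times> matrix. fst p i a)"
proof -
  have "continuous_on S (\<lambda>p::matrix \<times> matrix. fst p)" by (intro continuous_intros)
  then have "continuous_on S (\<lambda>p::matrix \<times> matrix. fst p i)"
    by (rule continuous_on_product_then_coordinatewise)
  then show ?thesis by (rule continuous_on_product_then_coordinatewise)
qed

lemma continuous_on_snd_entry [continuous_intros]:
  "continuous_on S (\<lambda>p::matrix \<times> matrix. snd p i a)"
proof -
  have "continuous_on S (\<lambda>p::matrix \<times> matrix. snd p)" by (intro continuous_intros)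
  then have "continuous_on S (\<lambda>p::matrix \<times> matrix. snd p i)"
    by (rule continuous_on_product_then_coordinatewise)
  then show ?thesis by (rule continuous_on_product_then_coordinatewise)
qed

lemma closed_orth2_pairs: "closed {p::matrix \<times> matrix. orth2 m (fst p) \<and> orth2 n (snd p)}"
  unfolding orth2_iff by (intro closed_Collect_conj closed_Collect_eq continuous_intros)

lemma best222_exists:
  assumes "m \<ge> 2" "n \<ge> 2"
  shows "\<exists>U W. best222 A m n U W"
proof -
  define F where "F = (entry_box m \<times> entry_box n) \<inter> {p. orth2 m (fst p) \<and> orth2 n (snd p)}"
  have cF: "compact F" unfolding F_def
    by (intro compact_Int_closed compact_Times compact_entry_box closed_orth2_pairs)
  have "(trunc m std2, trunc n std2) \<in> F"
    unfolding F_def using orth2_std2 assms trunc_in_entry_box orth2_trunc_iff by auto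
  then have ne: "F \<noteq> {}" by auto
  have cont: "continuous_on F (\<lambda>p. proj_norm2 A m n (fst p) (snd p))"
    unfolding proj_norm2_def frob2_def proj_def by (intro continuous_intros)
  obtain p where pF: "p \<in> F"
    and pmax: "\<And>q. q \<in> F \<Longrightarrow> proj_norm2 A m n (fst q) (snd q) \<le> proj_norm2 A m n (fst p) (snd p)"
    using continuous_attains_sup[OF cF ne cont] by blast
  have "best222 A m n (fst p) (snd p)"
    unfolding best222_iff
  proof (intro conjI allI impI)
    show "orth2 m (fst p)" "orth2 n (snd p)" using pF F_def by auto
    fix X Z assume "orth2 m X \<and> orth2 n Z"
    then have "(trunc m X, trunc n Z) \<in> F"
      unfolding F_def using trunc_in_entry_box orth2_trunc_iff by auto
    from pmax[OF this] show "proj_norm2 A m n X Z \<le> proj_norm2 A m n (fst p) (snd p)"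
      by (simp add: proj_norm2_trunc)
  qed
  then show ?thesis by blast
qed

subsection \<open>The optimal residual\<close>

lemma sum_mult_tucker:
  "(\<Sum>i<p. \<Sum>j<p. \<Sum>k<q. B i j k * tucker X X Z H i j k) =
   (\<Sum>a<2. \<Sum>b<2. \<Sum>c<2. proj B p q X X Z a b c * H a b c)"
  unfolding tucker_def proj_def
  by (simp add: sum_lessThan_2 sum.distrib sum_distrib_left sum_distrib_right
      distrib_left distrib_right mult_ac)

lemma proj_tucker:
  assumes "orth2 p X" "orth2 q Z" "a < 2" "b < 2" "c < 2"
  shows "proj (tucker X X Z H) p q X X Z a b c = H a b c"
proof -
  have "proj (tucker X X Z H) p q X X Z a b c =
    (\<Sum>\<alpha><2. \<Sum>\<beta><2. \<Sum>\<gamma><2. H \<alpha> \<beta> \<gamma> * (\<Sum>i<p. X i a * X i \<alpha>) * (\<Sum>j<p. X j b * X j \<beta>)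
        * (\<Sum>k<q. Z k c * Z k \<gamma>))"
    unfolding tucker_def proj_def
    by (simp add: sum_lessThan_2 sum.distrib sum_distrib_left sum_distrib_right
        distrib_left distrib_right mult_ac)
  then show ?thesis using assms unfolding orth2_def
    by (auto simp: sum_lessThan_2 less_2_cases_iff)
qed

lemma frob2_tucker:
  assumes "orth2 p X" "orth2 q Z"
  shows "frob2 (tucker X X Z H) p p q = frob2 H 2 2 2"
proof -
  have "frob2 (tucker X X Z H) p p q =
      (\<Sum>i<p. \<Sum>j<p. \<Sum>k<q. tucker X X Z H i j k * tucker X X Z H i j k)"
    unfolding frob2_def by (simp add: power2_eq_square)
  also have "\<dots> = (\<Sum>a<2. \<Sum>b<2. \<Sum>c<2. proj (tucker X X Z H) p q X X Z a b c * H a b c)"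
    by (rule sum_mult_tucker)
  also have "\<dots> = (\<Sum>a<2. \<Sum>b<2. \<Sum>c<2. H a b c * H a b c)"
    using proj_tucker[OF assms] by (intro sum.cong refl) auto
  finally show ?thesis unfolding frob2_def by (simp add: power2_eq_square)
qed

lemma frob2_diff: "frob2 (\<lambda>i j k. B i j k - T i j k) p q r =
   frob2 B p q r - 2 * (\<Sum>i<p. \<Sum>j<q. \<Sum>k<r. B i j k * T i j k) + frob2 T p q r"
  unfolding frob2_def
  by (simp add: power2_diff sum.distrib sum_subtractf sum_distrib_left mult.assoc)

lemma frob2_nonneg: "frob2 T p q r \<ge> 0"
  unfolding frob2_def by (intro sum_nonneg) auto

lemma frob2_residual:
  assumes "orth2 p X" "orth2 q Z"
  shows "frob2 (\<lambda>i j k. B i j k - tucker X X Z H i j k) p p q =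
    frob2 B p p q - proj_norm2 B p q X Z
      + frob2 (\<lambda>a b c. proj B p q X X Z a b c - H a b c) 2 2 2"
  unfolding frob2_diff sum_mult_tucker frob2_tucker[OF assms] proj_norm2_def
  by (simp add: frob2_diff)

lemma phi_le:
  assumes "orth2 p X" "orth2 q Z"
  shows "phi B p q \<le> frob2 B p p q - proj_norm2 B p q X Z"
proof -
  let ?S = "{frob2 (\<lambda>i j l. B i j l - tucker X X Z H i j l) p p q | X Z H. orth2 p X \<and> orth2 q Z}"
  have "bdd_below ?S" by (rule bdd_belowI[of _ 0]) (auto simp: frob2_nonneg)
  moreover have "frob2 (\<lambda>i j l. B i j l - tucker X X Z (proj B p q X X Z) i j l) p p q \<in> ?S"
    using assms by blast
  ultimately have "phi B p q \<le> frob2 (\<lambda>i j l. B i j l - tucker X X Z (proj B p q X X Z) i j l) p p q"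
    unfolding phi_def by (rule cInf_lower[rotated])
  also have "\<dots> = frob2 B p p q - proj_norm2 B p q X Z"
    using frob2_residual[OF assms, of B "proj B p q X X Z"] unfolding frob2_def by simp
  finally show ?thesis .
qed

lemma phi_eq_of_best222:
  assumes "p \<ge> 2" "q \<ge> 2" and best: "best222 B p q U W"
  shows "phi B p q = frob2 B p p q - proj_norm2 B p q U W"
proof (rule antisym)
  show "phi B p q \<le> frob2 B p p q - proj_norm2 B p q U W"
    using best by (intro phi_le) (auto simp: best222_iff)
  show "frob2 B p p q - proj_norm2 B p q U W \<le> phi B p q"
    unfolding phi_def
  proof (rule cInf_greatest)
    show "{frob2 (\<lambda>i j l. B i j l - tucker X X Z H i j l) p p q | X Z H. orth2 p X \<and> orth2 q Z} \<noteq> {}"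
      using orth2_std2 assms by blast
    fix x
    assume "x \<in> {frob2 (\<lambda>i j l. B i j l - tucker X X Z H i j l) p p q | X Z H. orth2 p X \<and> orth2 q Z}"
    then obtain X Z H where x: "x = frob2 (\<lambda>i j l. B i j l - tucker X X Z H i j l) p p q"
      and o: "orth2 p X" "orth2 q Z" by blast
    have "proj_norm2 B p q X Z \<le> proj_norm2 B p q U W" using best o by (auto simp: best222_iff)
    moreover have "0 \<le> frob2 (\<lambda>a b c. proj B p q X X Z a b c - H a b c) 2 2 2"
      by (rule frob2_nonneg)
    ultimately show "frob2 B p p q - proj_norm2 B p q U W \<le> x"
      unfolding x frob2_residual[OF o] by linarith
  qed
qed

subsection \<open>Block diagonal tensors\<close>

definition block_diag3 :: "tensor3 \<Rightarrow> tensor3 \<Rightarrow> tensor3 \<Rightarrow> nat \<Rightarrow> nat \<Rightarrow> nat \<Rightarrow> bool" where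
  "block_diag3 A A1 A2 m1 m2 n \<longleftrightarrow> (\<forall>i<m1 + m2. \<forall>j<m1 + m2. \<forall>k<n.
        A i j k = (if i < m1 \<and> j < m1 then A1 i j k
                   else if m1 \<le> i \<and> m1 \<le> j then A2 (i - m1) (j - m1) k else 0))"

context
  fixes A A1 A2 :: tensor3 and m1 m2 n :: nat
  assumes block: "block_diag3 A A1 A2 m1 m2 n"
begin

lemma block_diag3_11: "i < m1 \<Longrightarrow> j < m1 \<Longrightarrow> k < n \<Longrightarrow> A i j k = A1 i j k"
  using block unfolding block_diag3_def by auto

lemma block_diag3_12: "i < m1 \<Longrightarrow> j < m2 \<Longrightarrow> k < n \<Longrightarrow> A i (j + m1) k = 0"
  using block unfolding block_diag3_def by auto

lemma block_diag3_21: "i < m2 \<Longrightarrow> j < m1 \<Longrightarrow> k < n \<Longrightarrow> A (i + m1) j k = 0"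
  using block unfolding block_diag3_def by auto

lemma block_diag3_22: "i < m2 \<Longrightarrow> j < m2 \<Longrightarrow> k < n \<Longrightarrow> A (i + m1) (j + m1) k = A2 i j k"
  using block unfolding block_diag3_def by auto

lemma frob2_block_diag3: "frob2 A (m1 + m2) (m1 + m2) n = frob2 A1 m1 m1 n + frob2 A2 m2 m2 n"
  unfolding frob2_def sum_lessThan_add
  using block_diag3_11 block_diag3_12 block_diag3_21 block_diag3_22 by (simp add: sum.distrib)

lemma proj_norm2_first_block:
  assumes "\<forall>i<m2. \<forall>a<2. U (i + m1) a = 0"
  shows "proj_norm2 A (m1 + m2) n U W = proj_norm2 A1 m1 n U W"
proof -
  have "proj A (m1 + m2) n U U W a b c = proj A1 m1 n U U W a b c" if "a < 2" "b < 2" for a b c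
    unfolding proj_def sum_lessThan_add using block_diag3_11 assms that by (simp add: sum.distrib)
  then show ?thesis unfolding proj_norm2_def frob2_def by simp
qed

lemma proj_norm2_second_block:
  assumes "\<forall>i<m1. \<forall>a<2. U i a = 0"
  shows "proj_norm2 A (m1 + m2) n U W = proj_norm2 A2 m2 n (\<lambda>i a. U (i + m1) a) W"
proof -
  have "proj A (m1 + m2) n U U W a b c =
      proj A2 m2 n (\<lambda>i a. U (i + m1) a) (\<lambda>i a. U (i + m1) a) W a b c" if "a < 2" "b < 2" for a b c
    unfolding proj_def sum_lessThan_add using block_diag3_22 assms that by (simp add: sum.distrib)
  then show ?thesis unfolding proj_norm2_def frob2_def by simp
qed

lemma phi_ge_of_best222_first_block:
  assumes "m1 + m2 \<ge> 2" "n \<ge> 2" and best: "best222 A (m1 + m2) n U W"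
    and U: "\<forall>i<m2. \<forall>a<2. U (i + m1) a = 0"
  shows "phi A1 m1 n + frob2 A2 m2 m2 n \<le> phi A (m1 + m2) n"
proof -
  have "orth2 m1 U" "orth2 n W"
    using best U unfolding best222_iff orth2_def sum_lessThan_add by simp_all
  then have "phi A1 m1 n \<le> frob2 A1 m1 m1 n - proj_norm2 A1 m1 n U W"
    by (rule phi_le)
  then show ?thesis
    using phi_eq_of_best222[OF assms(1,2) best] proj_norm2_first_block[OF U] frob2_block_diag3
    by simp
qed

lemma phi_ge_of_best222_second_block:
  assumes "m1 + m2 \<ge> 2" "n \<ge> 2" and best: "best222 A (m1 + m2) n U W"
    and U: "\<forall>i<m1. \<forall>a<2. U i a = 0"
  shows "phi A2 m2 n + frob2 A1 m1 m1 n \<le> phi A (m1 + m2) n"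
proof -
  have "orth2 m2 (\<lambda>i a. U (i + m1) a)" "orth2 n W"
    using best U unfolding best222_iff orth2_def sum_lessThan_add by simp_all
  then have "phi A2 m2 n \<le> frob2 A2 m2 m2 n - proj_norm2 A2 m2 n (\<lambda>i a. U (i + m1) a) W"
    by (rule phi_le)
  then show ?thesis
    using phi_eq_of_best222[OF assms(1,2) best] proj_norm2_second_block[OF U] frob2_block_diag3
    by simp
qed

end

subsection \<open>The block sign flip\<close>

definition flip_block :: "nat \<Rightarrow> matrix \<Rightarrow> matrix" where
  "flip_block m1 U = (\<lambda>i a. if i < m1 then U i a else - U i a)"

lemma orth2_flip_block_iff: "orth2 (m1 + m2) (flip_block m1 U) \<longleftrightarrow> orth2 (m1 + m2) U"
  unfolding orth2_def sum_lessThan_add flip_block_def by simp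

lemma proj_norm2_flip_block:
  assumes "block_diag3 A A1 A2 m1 m2 n"
  shows "proj_norm2 A (m1 + m2) n (flip_block m1 U) W = proj_norm2 A (m1 + m2) n U W"
proof -
  have "proj A (m1 + m2) n (flip_block m1 U) (flip_block m1 U) W a b c = proj A (m1 + m2) n U U W a b c"
    for a b c
    unfolding proj_def sum_lessThan_add flip_block_def
    using block_diag3_12[OF assms] block_diag3_21[OF assms] by (simp add: sum.distrib)
  then show ?thesis unfolding proj_norm2_def frob2_def by simp
qed

lemma best222_flip_block:
  assumes "block_diag3 A A1 A2 m1 m2 n" "best222 A (m1 + m2) n U W"
  shows "best222 A (m1 + m2) n (flip_block m1 U) W"
  using assms(2) unfolding best222_iff proj_norm2_flip_block[OF assms(1)] orth2_flip_block_iff .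

definition gram :: "nat \<Rightarrow> matrix \<Rightarrow> nat \<Rightarrow> nat \<Rightarrow> real" where
  "gram p U a b = (\<Sum>i<p. U i a * U i b)"

text \<open>If flipping the second block amounts to the column change Q, then Q = 2 P - I with P the
  Gram matrix of the first block; hence P fixes the rows of the first block and kills those
  of the second.\<close>

lemma flip_block_eq_mult_rows:
  assumes orth: "orth2 (m1 + m2) U"
    and Q: "\<forall>i<m1 + m2. \<forall>a<2. flip_block m1 U i a = (\<Sum>b<2. U i b * Q b a)"
  shows "\<forall>i<m1. \<forall>a<2. U i a = (\<Sum>b<2. U i b * gram m1 U b a)"
    and "\<forall>i<m2. \<forall>a<2. (\<Sum>b<2. U (i + m1) b * gram m1 U b a) = 0"
proof -
  have Q_eq: "Q b a = 2 * gram m1 U b a - (if b = a then 1 else 0)" if ab: "a < 2" "b < 2" for a b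
  proof -
    have "(\<Sum>i<m1 + m2. U i b * flip_block m1 U i a) = (\<Sum>i<m1 + m2. U i b * (\<Sum>c<2. U i c * Q c a))"
      using Q ab by (intro sum.cong) auto
    also have "\<dots> = gram (m1 + m2) U b 0 * Q 0 a + gram (m1 + m2) U b 1 * Q 1 a"
      unfolding gram_def
      by (simp add: sum_lessThan_2 sum.distrib sum_distrib_left distrib_left mult_ac)
    also have "\<dots> = Q b a"
      using orth ab unfolding orth2_def gram_def by (auto simp: less_2_cases_iff)
    finally have "Q b a = gram m1 U b a - (\<Sum>i<m2. U (i + m1) b * U (i + m1) a)"
      unfolding flip_block_def sum_lessThan_add gram_def by (simp add: sum_negf)
    moreover have "gram (m1 + m2) U b a = gram m1 U b a + (\<Sum>i<m2. U (i + m1) b * U (i + m1) a)"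
      unfolding gram_def sum_lessThan_add ..
    moreover have "gram (m1 + m2) U b a = (if b = a then 1 else 0)"
      using orth ab unfolding orth2_def gram_def by auto
    ultimately show ?thesis by simp
  qed
  have rows: "flip_block m1 U i a = 2 * (\<Sum>b<2. U i b * gram m1 U b a) - U i a"
    if "i < m1 + m2" "a < 2" for i a
    using Q that Q_eq by (auto simp: sum_lessThan_2 less_2_cases_iff algebra_simps)
  show "\<forall>i<m1. \<forall>a<2. U i a = (\<Sum>b<2. U i b * gram m1 U b a)"
  proof (intro allI impI)
    fix i a :: nat assume "i < m1" "a < 2"
    with rows[of i a] show "U i a = (\<Sum>b<2. U i b * gram m1 U b a)"
      by (simp add: flip_block_def)
  qed
  show "\<forall>i<m2. \<forall>a<2. (\<Sum>b<2. U (i + m1) b * gram m1 U b a) = 0"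
  proof (intro allI impI)
    fix i a :: nat assume "i < m2" "a < 2"
    with rows[of "i + m1" a] show "(\<Sum>b<2. U (i + m1) b * gram m1 U b a) = 0"
      by (simp add: flip_block_def)
  qed
qed

lemma sym2_idempotent_cases:
  fixes p q r :: real
  assumes p: "p = p * p + q * q" and q: "q = q * p + r * q" and r: "r = q * q + r * r"
  shows "(p = 0 \<and> q = 0 \<and> r = 0) \<or> (p = 1 \<and> q = 0 \<and> r = 1) \<or>
    (\<exists>c s. c\<^sup>2 + s\<^sup>2 = 1 \<and> p = c\<^sup>2 \<and> q = c * s \<and> r = s\<^sup>2)"
proof (cases "q = 0")
  case True
  then have "p = 0 \<or> p = 1" "r = 0 \<or> r = 1" using p r by auto
  moreover have "\<exists>c s. c\<^sup>2 + s\<^sup>2 = 1 \<and> p = c\<^sup>2 \<and> q = c * s \<and> r = s\<^sup>2"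
    if "(p = 1 \<and> r = 0) \<or> (p = 0 \<and> r = 1)"
    using that True by (metis (mono_tags) add.commute add_0 mult_zero_left mult_zero_right
        power2_eq_square mult_1_right)
  ultimately show ?thesis using True by blast
next
  case False
  have "q * (p + r - 1) = 0" using q by (simp add: algebra_simps)
  then have pr: "p + r = 1" using False by simp
  have "r = 1 - p" using pr by simp
  then have "p * r = p - p * p" by (simp add: right_diff_distrib)
  then have "q * q = p * r" using p by linarith
  moreover have "q * q > 0" using False not_real_square_gt_zero by blast
  ultimately have p0: "p > 0"
    using pr mult_nonpos_nonneg[of p r] by (cases "p > 0") auto
  define c where "c = sqrt p"
  define s where "s = q / sqrt p"
  have c2: "c\<^sup>2 = p" unfolding c_def using p0 by simp
  have s2: "s\<^sup>2 = r" unfolding s_def power_divide using p0 \<open>q * q = p * r\<close>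
    by (simp add: power2_eq_square)
  have "q = c * s" unfolding c_def s_def using p0 by simp
  then show ?thesis using c2 s2 pr by auto
qed

text \<open>In both lemmas c and s times the conclusion lie in the ideal generated by the
  hypotheses.\<close>

lemma fixed_by_rank_one_projection:
  fixes c s u v :: real
  assumes "c\<^sup>2 + s\<^sup>2 = 1" "u = u * c\<^sup>2 + v * (c * s)" "v = u * (c * s) + v * s\<^sup>2"
  shows "v * c - u * s = 0"
  using assms by algebra

lemma killed_by_rank_one_projection:
  fixes c s u v :: real
  assumes "c\<^sup>2 + s\<^sup>2 = 1" "u * c\<^sup>2 + v * (c * s) = 0" "u * (c * s) + v * s\<^sup>2 = 0"
  shows "u * c + v * s = 0"
  using assms by algebra

lemma flip_block_gram_relations:
  assumes orth: "orth2 (m1 + m2) U"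
    and Q: "\<forall>i<m1 + m2. \<forall>a<2. flip_block m1 U i a = (\<Sum>b<2. U i b * Q b a)"
  defines "p \<equiv> gram m1 U 0 0" and "q \<equiv> gram m1 U 0 1" and "r \<equiv> gram m1 U 1 1"
  shows "\<And>i. i < m1 \<Longrightarrow> U i 0 = U i 0 * p + U i 1 * q"
    and "\<And>i. i < m1 \<Longrightarrow> U i 1 = U i 0 * q + U i 1 * r"
    and "\<And>i. i < m2 \<Longrightarrow> U (i + m1) 0 * p + U (i + m1) 1 * q = 0"
    and "\<And>i. i < m2 \<Longrightarrow> U (i + m1) 0 * q + U (i + m1) 1 * r = 0"
    and "p = p * p + q * q" "q = q * p + r * q" "r = q * q + r * r"
proof -
  note fst_rows = flip_block_eq_mult_rows(1)[OF orth Q]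
  note snd_rows = flip_block_eq_mult_rows(2)[OF orth Q]
  have g10: "gram m1 U 1 0 = q" unfolding q_def gram_def by (simp add: mult.commute)
  have two: "(0::nat) < 2" "(1::nat) < 2" by simp_all
  show x: "U i 0 = U i 0 * p + U i 1 * q" "U i 1 = U i 0 * q + U i 1 * r" if "i < m1" for i
    using fst_rows[rule_format, OF that two(1)] fst_rows[rule_format, OF that two(2)]
    unfolding sum_lessThan_2 g10 p_def q_def r_def by blast+
  show "U (i + m1) 0 * p + U (i + m1) 1 * q = 0" "U (i + m1) 0 * q + U (i + m1) 1 * r = 0"
    if "i < m2" for i
    using snd_rows[rule_format, OF that two(1)] snd_rows[rule_format, OF that two(2)]
    unfolding sum_lessThan_2 g10 p_def q_def r_def by blast+
  show "p = p * p + q * q"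
    using sum_linear_comb[where p = m1 and f = "\<lambda>i. U i 0" and k = "\<lambda>i. U i 0", OF x(1)]
    unfolding p_def q_def gram_def by simp
  show "q = q * p + r * q"
    using sum_linear_comb[where p = m1 and f = "\<lambda>i. U i 1" and k = "\<lambda>i. U i 0", OF x(2)]
    unfolding p_def q_def r_def gram_def by simp
  show "r = q * q + r * r"
    using sum_linear_comb[where p = m1 and f = "\<lambda>i. U i 1" and k = "\<lambda>i. U i 1", OF x(2)] g10
    unfolding r_def gram_def by simp
qed

lemma best222_rotation_to_block_diag:
  assumes block: "block_diag3 A A1 A2 m1 m2 n" and dims: "m1 + m2 \<ge> 2" "n \<ge> 2"
    and best: "best222 A (m1 + m2) n U W"
    and uniq: "unique_best222 A (m1 + m2) n"
    and ineq1: "phi A (m1 + m2) n < phi A1 m1 n + frob2 A2 m2 m2 n"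
    and ineq2: "phi A (m1 + m2) n < phi A2 m2 n + frob2 A1 m1 m1 n"
  obtains c s where "c\<^sup>2 + s\<^sup>2 = 1" "\<forall>i<m1. U i 1 * c - U i 0 * s = 0"
    "\<forall>i<m2. U (i + m1) 0 * c + U (i + m1) 1 * s = 0"
proof -
  have orth: "orth2 (m1 + m2) U" using best unfolding best222_iff by simp
  obtain Q where Q: "\<forall>i<m1 + m2. \<forall>a<2. flip_block m1 U i a = (\<Sum>b<2. U i b * Q b a)"
    using uniq best best222_flip_block[OF block best]
    unfolding unique_best222_def equiv222_def by blast
  note G = flip_block_gram_relations[OF orth Q]
  consider "gram m1 U 0 0 = 0 \<and> gram m1 U 0 1 = 0 \<and> gram m1 U 1 1 = 0"
    | "gram m1 U 0 0 = 1 \<and> gram m1 U 0 1 = 0 \<and> gram m1 U 1 1 = 1"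
    | c s where "c\<^sup>2 + s\<^sup>2 = 1" "gram m1 U 0 0 = c\<^sup>2" "gram m1 U 0 1 = c * s"
        "gram m1 U 1 1 = s\<^sup>2"
    using sym2_idempotent_cases[OF G(5-7)] by blast
  then show ?thesis
  proof cases
    case 1
    then have "\<forall>i<m1. \<forall>a<2. U i a = 0" using G(1,2) by (simp add: all_lessThan_2)
    from phi_ge_of_best222_second_block[OF block dims best this] ineq2 show ?thesis by simp
  next
    case 2
    then have "\<forall>i<m2. \<forall>a<2. U (i + m1) a = 0" using G(3,4) by (simp add: all_lessThan_2)
    from phi_ge_of_best222_first_block[OF block dims best this] ineq1 show ?thesis by simp
  next
    case (3 c s)
    have "U i 1 * c - U i 0 * s = 0" if "i < m1" for i
      by (rule fixed_by_rank_one_projection[OF 3(1) G(1,2)[OF that, unfolded 3(2-4)]])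
    moreover have "U (i + m1) 0 * c + U (i + m1) 1 * s = 0" if "i < m2" for i
      by (rule killed_by_rank_one_projection[OF 3(1) G(3,4)[OF that, unfolded 3(2-4)]])
    ultimately show ?thesis using that 3 by blast
  qed
qed

subsection \<open>Rotating the columns\<close>

definition rot :: "real \<Rightarrow> real \<Rightarrow> matrix \<Rightarrow> matrix" where
  "rot c s U = (\<lambda>i a. U i 0 * (if a = 0 then c else - s) + U i 1 * (if a = 0 then s else c))"

lemma rot_0: "rot c s U i 0 = U i 0 * c + U i 1 * s"
  and rot_1: "rot c s U i 1 = U i 0 * (- s) + U i 1 * c"
  unfolding rot_def by simp_all

lemma sum_mult_linear_comb:
  fixes x y :: "nat \<Rightarrow> real"
  shows "(\<Sum>i<p. (x i * a + y i * b) * (x i * c + y i * d)) =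
    a * c * (\<Sum>i<p. x i * x i) + (a * d + b * c) * (\<Sum>i<p. x i * y i) + b * d * (\<Sum>i<p. y i * y i)"
proof -
  have "(\<Sum>i<p. (x i * a + y i * b) * (x i * c + y i * d)) =
     (\<Sum>i<p. a * c * (x i * x i) + (a * d + b * c) * (x i * y i) + b * d * (y i * y i))"
    by (rule sum.cong) (simp_all add: algebra_simps)
  then show ?thesis by (simp add: sum.distrib sum_distrib_left)
qed

lemma orth2_rot:
  assumes "c\<^sup>2 + s\<^sup>2 = 1" "orth2 p U"
  shows "orth2 p (rot c s U)"
proof -
  have o: "(\<Sum>i<p. U i 0 * U i 0) = 1" "(\<Sum>i<p. U i 1 * U i 1) = 1" "(\<Sum>i<p. U i 0 * U i 1) = 0"
    using assms(2) unfolding orth2_iff by auto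
  have "c * c + s * s = 1" using assms(1) by (simp add: power2_eq_square)
  then show ?thesis unfolding orth2_iff rot_0 rot_1 sum_mult_linear_comb o
    by (simp add: algebra_simps)
qed

lemma proj_rot:
  "proj A m n (rot c s X) (rot c s X) W a b k =
    (if a = 0 then c else - s) * (if b = 0 then c else - s) * proj A m n X X W 0 0 k
  + (if a = 0 then c else - s) * (if b = 0 then s else c) * proj A m n X X W 0 1 k
  + (if a = 0 then s else c) * (if b = 0 then c else - s) * proj A m n X X W 1 0 k
  + (if a = 0 then s else c) * (if b = 0 then s else c) * proj A m n X X W 1 1 k"
  unfolding proj_def rot_def by (simp add: sum.distrib sum_distrib_left ring_distribs mult_ac)

text \<open>Frobenius invariance of a 2 x 2 matrix P under P \<mapsto> R' P R for a rotation R.\<close>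
lemma sum_sq_rotated:
  fixes c s :: real and P :: "nat \<Rightarrow> nat \<Rightarrow> real"
  assumes "c\<^sup>2 + s\<^sup>2 = 1"
  shows "(\<Sum>a<(2::nat). \<Sum>b<(2::nat).
      ((if a = 0 then c else - s) * (if b = 0 then c else - s) * P 0 0
     + (if a = 0 then c else - s) * (if b = 0 then s else c) * P 0 1
     + (if a = 0 then s else c) * (if b = 0 then c else - s) * P 1 0
     + (if a = 0 then s else c) * (if b = 0 then s else c) * P 1 1)\<^sup>2) = (\<Sum>a<2. \<Sum>b<2. (P a b)\<^sup>2)"
  using assms by (simp add: sum_lessThan_2) algebra

lemma proj_norm2_rot:
  assumes "c\<^sup>2 + s\<^sup>2 = 1"
  shows "proj_norm2 A m n (rot c s U) W = proj_norm2 A m n U W"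
proof -
  have slices: "proj_norm2 A m n X W = (\<Sum>k<2. \<Sum>a<2. \<Sum>b<2. (proj A m n X X W a b k)\<^sup>2)" for X
    unfolding proj_norm2_def frob2_def by (simp add: sum_lessThan_2)
  have "(\<Sum>a<2. \<Sum>b<2. (proj A m n (rot c s U) (rot c s U) W a b k)\<^sup>2) =
      (\<Sum>a<2. \<Sum>b<2. (proj A m n U U W a b k)\<^sup>2)" for k
    unfolding proj_rot by (rule sum_sq_rotated[OF assms])
  then show ?thesis unfolding slices by simp
qed

lemma best222_rot:
  assumes "c\<^sup>2 + s\<^sup>2 = 1" "best222 A m n U W"
  shows "best222 A m n (rot c s U) W"
  using assms(2) orth2_rot[OF assms(1)] unfolding best222_iff proj_norm2_rot[OF assms(1)] by blast

subsection \<open>A nonnegative representative\<close>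

definition slice_form :: "tensor3 \<Rightarrow> nat \<Rightarrow> matrix \<Rightarrow> nat \<Rightarrow> nat \<Rightarrow> nat \<Rightarrow> real" where
  "slice_form A m V a b k = (\<Sum>i<m. \<Sum>j<m. V i a * V j b * A i j k)"

lemma proj_eq_sum_slice_form: "proj A m n V V Z a b c = (\<Sum>k<n. Z k c * slice_form A m V a b k)"
proof -
  have "proj A m n V V Z a b c = (\<Sum>i<m. \<Sum>k<n. \<Sum>j<m. V i a * V j b * Z k c * A i j k)"
    unfolding proj_def by (rule sum.cong[OF refl], rule sum.swap)
  also have "\<dots> = (\<Sum>k<n. \<Sum>i<m. \<Sum>j<m. V i a * V j b * Z k c * A i j k)"
    by (rule sum.swap)
  finally show ?thesis unfolding slice_form_def by (simp add: sum_distrib_left mult_ac)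
qed

lemma proj_norm2_block_columns:
  assumes block: "block_diag3 A A1 A2 m1 m2 n"
    and V1: "\<forall>i<m1. V i 1 = 0" and V2: "\<forall>i<m2. V (i + m1) 0 = 0"
  shows "proj_norm2 A (m1 + m2) n V Z =
    (\<Sum>c<2. (\<Sum>k<n. Z k c * slice_form A (m1 + m2) V 0 0 k)\<^sup>2)
      + (\<Sum>c<2. (\<Sum>k<n. Z k c * slice_form A (m1 + m2) V 1 1 k)\<^sup>2)"
proof -
  have "slice_form A (m1 + m2) V 0 1 k = 0" "slice_form A (m1 + m2) V 1 0 k = 0" if "k < n" for k
    unfolding slice_form_def sum_lessThan_add
    using V1 V2 block_diag3_12[OF block _ _ that] block_diag3_21[OF block _ _ that] by simp_all
  then show ?thesis
    unfolding proj_norm2_def frob2_def proj_eq_sum_slice_form by (simp add: sum_lessThan_2)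
qed

lemma abs_slice_form_le:
  assumes "\<forall>i<m. \<forall>j<m. A i j k \<ge> 0"
  shows "\<bar>slice_form A m V a b k\<bar> \<le> slice_form A m (\<lambda>i a. \<bar>V i a\<bar>) a b k"
proof -
  have "\<bar>slice_form A m V a b k\<bar> \<le> (\<Sum>i<m. \<Sum>j<m. \<bar>V i a * V j b * A i j k\<bar>)"
    unfolding slice_form_def by (rule order_trans[OF sum_abs]) (intro sum_mono sum_abs)
  also have "\<dots> = slice_form A m (\<lambda>i a. \<bar>V i a\<bar>) a b k"
    unfolding slice_form_def using assms by (intro sum.cong refl) (auto simp: abs_mult)
  finally show ?thesis .
qed

lemma orth2_bessel:
  fixes t :: "nat \<Rightarrow> real"
  assumes "orth2 n Z"
  shows "(\<Sum>c<2. (\<Sum>k<n. Z k c * t k)\<^sup>2) \<le> (\<Sum>k<n. (t k)\<^sup>2)"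
proof -
  define a b where "a = (\<Sum>k<n. Z k 0 * t k)" and "b = (\<Sum>k<n. Z k 1 * t k)"
  have o: "(\<Sum>k<n. Z k 0 * Z k 0) = 1" "(\<Sum>k<n. Z k 1 * Z k 1) = 1" "(\<Sum>k<n. Z k 0 * Z k 1) = 0"
    using assms unfolding orth2_iff by auto
  have "(\<Sum>k<n. (t k - a * Z k 0 - b * Z k 1)\<^sup>2) =
      (\<Sum>k<n. (t k)\<^sup>2 - 2 * a * (Z k 0 * t k) - 2 * b * (Z k 1 * t k)
        + a * a * (Z k 0 * Z k 0) + 2 * a * b * (Z k 0 * Z k 1) + b * b * (Z k 1 * Z k 1))"
    by (rule sum.cong) (simp_all add: power2_eq_square algebra_simps)
  also have "\<dots> = (\<Sum>k<n. (t k)\<^sup>2) - a * a - b * b"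
    unfolding sum.distrib sum_subtractf sum_distrib_left[symmetric] o a_def[symmetric] b_def[symmetric]
    by simp
  moreover have "0 \<le> (\<Sum>k<n. (t k - a * Z k 0 - b * Z k 1)\<^sup>2)" by (intro sum_nonneg) simp
  ultimately have "0 \<le> (\<Sum>k<n. (t k)\<^sup>2) - a * a - b * b" by simp
  then show ?thesis unfolding a_def b_def by (simp add: sum_lessThan_2 power2_eq_square)
qed

lemma orth2_bessel_eq:
  fixes t :: "nat \<Rightarrow> real"
  assumes o: "orth2 n Z" and t: "\<And>k. k < n \<Longrightarrow> t k = Z k 0 * \<alpha> + Z k 1 * \<beta>"
  shows "(\<Sum>c<2. (\<Sum>k<n. Z k c * t k)\<^sup>2) = (\<Sum>k<n. (t k)\<^sup>2)"
proof -
  have oo: "(\<Sum>i<n. Z i 0 * Z i 0) = 1" "(\<Sum>i<n. Z i 1 * Z i 1) = 1" "(\<Sum>i<n. Z i 0 * Z i 1) = 0"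
    "(\<Sum>i<n. Z i 1 * Z i 0) = 0"
    using o unfolding orth2_iff by auto
  have a: "(\<Sum>k<n. Z k 0 * t k) = \<alpha>" using sum_linear_comb[where p = n and f = t and k = "\<lambda>k. Z k 0", OF t] oo by simp
  have b: "(\<Sum>k<n. Z k 1 * t k) = \<beta>" using sum_linear_comb[where p = n and f = t and k = "\<lambda>k. Z k 1", OF t] oo by simp
  have "(\<Sum>k<n. t k * t k) = \<alpha> * (\<Sum>k<n. t k * Z k 0) + \<beta> * (\<Sum>k<n. t k * Z k 1)"
    using sum_linear_comb[where p = n and f = t and k = t, OF t] by simp
  also have "\<dots> = \<alpha> * \<alpha> + \<beta> * \<beta>" using a b by (simp add: mult.commute)
  finally show ?thesis using a b by (simp add: sum_lessThan_2 power2_eq_square)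
qed

lemma exists_unit_normalization:
  fixes r :: "nat \<Rightarrow> real"
  assumes "(\<Sum>k<n. r k * r k) \<noteq> 0"
  shows "\<exists>w N. (\<Sum>k<n. w k * w k) = 1 \<and> N \<noteq> 0 \<and> (\<forall>k. r k = N * w k)"
proof -
  define N where "N = sqrt (\<Sum>k<n. r k * r k)"
  have pos: "(\<Sum>k<n. r k * r k) > 0"
    using assms sum_nonneg[of "{..<n}" "\<lambda>k. r k * r k"] by fastforce
  then have "(\<Sum>k<n. (r k / N) * (r k / N)) = 1"
    unfolding N_def by (simp add: sum_divide_distrib[symmetric])
  moreover have "N \<noteq> 0" "\<forall>k. r k = N * (r k / N)" unfolding N_def using pos by simp_all
  ultimately show ?thesis by (intro exI[of _ "\<lambda>k. r k / N"] exI[of _ N]) blast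
qed

lemma exists_unit_multiple:
  fixes s :: "nat \<Rightarrow> real"
  assumes "n \<ge> 1"
  shows "\<exists>z \<alpha>. (\<Sum>k<n. z k * z k) = 1 \<and> (\<forall>k<n. s k = \<alpha> * z k)"
proof (cases "(\<Sum>k<n. s k * s k) = 0")
  case True
  then have "\<forall>k<n. s k = 0 * std2 k 0"
    using sum_nonneg_eq_0_iff[of "{..<n}" "\<lambda>k. s k * s k"] by simp
  moreover have "(\<Sum>k<n. std2 k 0 * std2 k 0) = (\<Sum>k<n. if k = 0 then 1 else 0)"
    by (intro sum.cong) (auto simp: std2_def)
  then have "(\<Sum>k<n. std2 k 0 * std2 k 0) = 1" using assms by simp
  ultimately show ?thesis by (intro exI[of _ "\<lambda>k. std2 k 0"] exI[of _ 0]) blast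
next
  case False
  then show ?thesis using exists_unit_normalization by blast
qed

lemma exists_unit_orthogonal:
  fixes z :: "nat \<Rightarrow> real"
  assumes n: "n \<ge> 2"
  shows "\<exists>w. (\<Sum>k<n. w k * w k) = 1 \<and> (\<Sum>k<n. z k * w k) = 0"
proof (cases "z 0 * z 0 + z 1 * z 1 = 0")
  case True
  then have "z 0 = 0" "z 1 = 0" by (auto simp: add_nonneg_eq_0_iff)
  then show ?thesis
    using sum_lessThan_eq_first_two[OF n, of "\<lambda>k. std2 k 0 * std2 k 0"]
      sum_lessThan_eq_first_two[OF n, of "\<lambda>k. z k * std2 k 0"]
    by (auto simp: std2_def)
next
  case False
  text \<open>Rotate the first two coordinates of z by a right angle.\<close>
  define r :: "nat \<Rightarrow> real" where "r = (\<lambda>k. if k = 0 then - z 1 else if k = 1 then z 0 else 0)"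
  have "(\<Sum>k<n. r k * r k) = z 0 * z 0 + z 1 * z 1"
    using sum_lessThan_eq_first_two[OF n, of "\<lambda>k. r k * r k"] by (simp add: r_def)
  with False obtain w N where w: "(\<Sum>k<n. w k * w k) = 1" and "N \<noteq> 0" "\<forall>k. r k = N * w k"
    using exists_unit_normalization[of r n] by auto
  moreover have "(\<Sum>k<n. z k * r k) = 0"
    using sum_lessThan_eq_first_two[OF n, of "\<lambda>k. z k * r k"] by (simp add: r_def)
  ultimately have "N * (\<Sum>k<n. z k * w k) = 0" by (simp add: sum_distrib_left mult.left_commute)
  with w \<open>N \<noteq> 0\<close> show ?thesis by auto
qed

lemma exists_orthonormal_completion:
  fixes z t :: "nat \<Rightarrow> real"
  assumes n: "n \<ge> 2" and z: "(\<Sum>k<n. z k * z k) = 1"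
  shows "\<exists>w \<alpha> \<beta>. (\<Sum>k<n. w k * w k) = 1 \<and> (\<Sum>k<n. z k * w k) = 0 \<and>
    (\<forall>k<n. t k = \<alpha> * z k + \<beta> * w k)"
proof -
  define a where "a = (\<Sum>k<n. t k * z k)"
  define r where "r = (\<lambda>k. t k - a * z k)"
  have "(\<Sum>k<n. z k * r k) = (\<Sum>k<n. t k * z k - a * (z k * z k))"
    unfolding r_def by (rule sum.cong) (simp_all add: algebra_simps)
  then have zr: "(\<Sum>k<n. z k * r k) = 0"
    using z unfolding a_def by (simp add: sum_subtractf sum_distrib_left[symmetric])
  show ?thesis
  proof (cases "(\<Sum>k<n. r k * r k) = 0")
    case True
    then have "\<forall>k<n. t k = a * z k + 0 * w k" for w
      using sum_nonneg_eq_0_iff[of "{..<n}" "\<lambda>k. r k * r k"] unfolding r_def by simp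
    then show ?thesis using exists_unit_orthogonal[OF n, of z] by blast
  next
    case False
    then obtain w N where w: "(\<Sum>k<n. w k * w k) = 1" and "N \<noteq> 0" and r: "\<forall>k. r k = N * w k"
      using exists_unit_normalization[of r n] by auto
    then have "N * (\<Sum>k<n. z k * w k) = 0"
      using zr by (simp add: sum_distrib_left mult.left_commute)
    with \<open>N \<noteq> 0\<close> have "(\<Sum>k<n. z k * w k) = 0" by simp
    moreover have "\<forall>k<n. t k = a * z k + N * w k" using r unfolding r_def by (metis diff_add_cancel add.commute)
    ultimately show ?thesis using w by blast
  qed
qed

lemma orth2_exists_span:
  fixes s t :: "nat \<Rightarrow> real"
  assumes n: "n \<ge> 2"
  shows "\<exists>Z. orth2 n Z \<and> (\<Sum>c<2. (\<Sum>k<n. Z k c * s k)\<^sup>2) = (\<Sum>k<n. (s k)\<^sup>2)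
              \<and> (\<Sum>c<2. (\<Sum>k<n. Z k c * t k)\<^sup>2) = (\<Sum>k<n. (t k)\<^sup>2)"
proof -
  obtain z \<alpha> where z: "(\<Sum>k<n. z k * z k) = 1" and sz: "\<forall>k<n. s k = \<alpha> * z k"
    using exists_unit_multiple[of n s] n by auto
  obtain w \<alpha>' \<beta>' where w: "(\<Sum>k<n. w k * w k) = 1" "(\<Sum>k<n. z k * w k) = 0"
    and tw: "\<forall>k<n. t k = \<alpha>' * z k + \<beta>' * w k"
    using exists_orthonormal_completion[OF n z, of t] by blast
  define Z :: matrix where "Z = (\<lambda>k c. if c = 0 then z k else w k)"
  have oZ: "orth2 n Z" unfolding orth2_iff Z_def using z w by (simp add: mult.commute)
  have "s k = Z k 0 * \<alpha> + Z k 1 * 0" "t k = Z k 0 * \<alpha>' + Z k 1 * \<beta>'" if "k < n" for k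
    using sz tw that by (simp_all add: Z_def mult.commute)
  then show ?thesis using orth2_bessel_eq[OF oZ] oZ by blast
qed

text \<open>Absolute values only enlarge the diagonal slice forms, and a suitable Z captures their
  full norm.\<close>
lemma best222_abs_block_columns:
  assumes block: "block_diag3 A A1 A2 m1 m2 n" and nn: "nonneg3 A (m1 + m2) n" and "n \<ge> 2"
    and best: "best222 A (m1 + m2) n V W"
    and V1: "\<forall>i<m1. V i 1 = 0" and V2: "\<forall>i<m2. V (i + m1) 0 = 0"
  shows "\<exists>W'. best222 A (m1 + m2) n (\<lambda>i a. \<bar>V i a\<bar>) W'"
proof -
  define Va :: matrix where "Va = (\<lambda>i a. \<bar>V i a\<bar>)"
  have Va1: "\<forall>i<m1. Va i 1 = 0" and Va2: "\<forall>i<m2. Va (i + m1) 0 = 0"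
    using V1 V2 by (auto simp: Va_def)
  have "orth2 (m1 + m2) V" "orth2 n W" using best unfolding best222_iff by auto
  then have oVa: "orth2 (m1 + m2) Va"
    using V1 V2 unfolding orth2_iff Va_def sum_lessThan_add by (simp add: abs_mult[symmetric])
  define s t s' t' where "s = slice_form A (m1 + m2) V 0 0" and "t = slice_form A (m1 + m2) V 1 1"
    and "s' = slice_form A (m1 + m2) Va 0 0" and "t' = slice_form A (m1 + m2) Va 1 1"
  obtain W' where oW': "orth2 n W'"
    and sW': "(\<Sum>c<2. (\<Sum>k<n. W' k c * s' k)\<^sup>2) = (\<Sum>k<n. (s' k)\<^sup>2)"
    and tW': "(\<Sum>c<2. (\<Sum>k<n. W' k c * t' k)\<^sup>2) = (\<Sum>k<n. (t' k)\<^sup>2)"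
    using orth2_exists_span[OF \<open>n \<ge> 2\<close>] by blast
  have "proj_norm2 A (m1 + m2) n V W = (\<Sum>c<2. (\<Sum>k<n. W k c * s k)\<^sup>2) + (\<Sum>c<2. (\<Sum>k<n. W k c * t k)\<^sup>2)"
    unfolding proj_norm2_block_columns[OF block V1 V2] s_def t_def ..
  also have "\<dots> \<le> (\<Sum>k<n. (s k)\<^sup>2) + (\<Sum>k<n. (t k)\<^sup>2)"
    using orth2_bessel[OF \<open>orth2 n W\<close>] by (intro add_mono)
  also have "\<dots> \<le> (\<Sum>k<n. (s' k)\<^sup>2) + (\<Sum>k<n. (t' k)\<^sup>2)"
  proof -
    have "(slice_form A (m1 + m2) V a a k)\<^sup>2 \<le> (slice_form A (m1 + m2) Va a a k)\<^sup>2"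
      if "k < n" for a k
    proof -
      have "\<bar>slice_form A (m1 + m2) V a a k\<bar> \<le> slice_form A (m1 + m2) Va a a k"
        using abs_slice_form_le nn that unfolding nonneg3_def Va_def by auto
      then show ?thesis by (metis abs_ge_zero abs_le_square_iff abs_of_nonneg order_trans)
    qed
    then show ?thesis unfolding s_def t_def s'_def t'_def by (intro add_mono sum_mono) auto
  qed
  also have "\<dots> = proj_norm2 A (m1 + m2) n Va W'"
    unfolding proj_norm2_block_columns[OF block Va1 Va2] s'_def[symmetric] t'_def[symmetric] sW' tW' ..
  finally have "proj_norm2 A (m1 + m2) n V W \<le> proj_norm2 A (m1 + m2) n Va W'" .
  with best oVa oW' show ?thesis unfolding Va_def by (blast intro: best222_of_le)
qed

theorem mainTheorem4:
  fixes A A1 A2 :: tensor3 and m1 m2 n :: nat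
  assumes dims: "m1 \<ge> 2" "m2 \<ge> 2" "n \<ge> 2"
    and sym: "sym12 A (m1 + m2) n"
    and nn: "nonneg3 A (m1 + m2) n"
    and block: "\<forall>i<m1 + m2. \<forall>j<m1 + m2. \<forall>k<n.
        A i j k = (if i < m1 \<and> j < m1 then A1 i j k
                   else if m1 \<le> i \<and> m1 \<le> j then A2 (i - m1) (j - m1) k else 0)"
    and irr1: "irreducible3 A1 m1 n"
    and irr2: "irreducible3 A2 m2 n"
    and ineq1: "phi A (m1 + m2) n < phi A1 m1 n + frob2 A2 m2 m2 n"
    and ineq2: "phi A (m1 + m2) n < phi A2 m2 n + frob2 A1 m1 m1 n"
    and uniq: "unique_best222 A (m1 + m2) n"
  shows "\<exists>U W u1 u2. best222 A (m1 + m2) n U W \<and>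
           (\<forall>i<m1 + m2. U i 0 = (if i < m1 then u1 i else 0) \<and>
                         U i 1 = (if i < m1 then 0 else u2 (i - m1))) \<and>
           (\<forall>i<m1. u1 i \<ge> (0::real)) \<and> (\<forall>i<m2. u2 i \<ge> (0::real))"
proof -
  have B: "block_diag3 A A1 A2 m1 m2 n" using block unfolding block_diag3_def .
  have d: "m1 + m2 \<ge> 2" using dims by simp
  obtain U W where best: "best222 A (m1 + m2) n U W" using best222_exists[OF d dims(3)] by blast
  obtain c s where cs: "c\<^sup>2 + s\<^sup>2 = 1" and h1: "\<forall>i<m1. U i 1 * c - U i 0 * s = 0"
    and h2: "\<forall>i<m2. U (i + m1) 0 * c + U (i + m1) 1 * s = 0"
    using best222_rotation_to_block_diag[OF B d dims(3) best uniq ineq1 ineq2] by blast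
  define V where "V = rot c s U"
  have V1: "\<forall>i<m1. V i 1 = 0" unfolding V_def rot_1 using h1 by (auto simp: algebra_simps)
  have V2: "\<forall>i<m2. V (i + m1) 0 = 0" unfolding V_def rot_0 using h2 by auto
  obtain W' where best': "best222 A (m1 + m2) n (\<lambda>i a. \<bar>V i a\<bar>) W'"
    using best222_abs_block_columns[OF B nn dims(3) best222_rot[OF cs best, folded V_def] V1 V2] by blast
  have shape: "\<forall>i<m1 + m2. \<bar>V i 0\<bar> = (if i < m1 then \<bar>V i 0\<bar> else 0) \<and>
      \<bar>V i 1\<bar> = (if i < m1 then 0 else \<bar>V (i - m1 + m1) 1\<bar>)"
  proof (intro allI impI conjI)
    fix i assume "i < m1 + m2"
    then show "\<bar>V i 0\<bar> = (if i < m1 then \<bar>V i 0\<bar> else 0)"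
      using V2[rule_format, of "i - m1"] by (cases "i < m1") auto
    show "\<bar>V i 1\<bar> = (if i < m1 then 0 else \<bar>V (i - m1 + m1) 1\<bar>)"
      using V1 by auto
  qed
  show ?thesis
    by (intro exI[of _ "\<lambda>i a. \<bar>V i a\<bar>"] exI[of _ W'] exI[of _ "\<lambda>i. \<bar>V i 0\<bar>"]
        exI[of _ "\<lambda>i. \<bar>V (i + m1) 1\<bar>"] conjI best' shape) simp_all
qed

end
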